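(* Assume $r:\mathbb{R}\to\mathbb{R}$ is an integrable function with $|r(a)|\le r_{\max}$ for all $a$. For every $\alpha>2r_{\max}$, the function $J(\pi_{\mu,\sigma})=\mathbb{E}_{a\sim\mathcal N(\mu,\sigma^2)}\big[r(a)-\alpha\log\mathcal N(a;\mu,\sigma^2)\big]$ of $(\mu,\sigma)\in\mathbb{R}\times(0,\infty)$ has no stationary point.
   Context: $\mathcal N(a;\mu,\sigma^2)$ denotes the Gaussian density with mean $\mu$ and standard deviation $\sigma>0$. This is the single-state (bandit) entropy-regularized objective with action space $\mathbb{R}$ and Gaussian policy $\pi_{\mu,\sigma}=\mathcal N(\mu,\sigma^2)$. *)

theory Defs
  imports "HOL-Probability.Probability"
begin

text \<open>Only meaningful for sigma > 0.\<close>
definition gauss_obj :: "(real \<Rightarrow> real) \<Rightarrow> real \<Rightarrow> real \<times> real \<Rightarrow> real" where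
  "gauss_obj r \<alpha> p = (let \<mu> = fst p; \<sigma> = snd p in
     integral\<^sup>L (density lborel (normal_density \<mu> \<sigma>))
       (\<lambda>a. r a - \<alpha> * ln (normal_density \<mu> \<sigma> a)))"

definition stationary_point :: "(real \<times> real \<Rightarrow> real) \<Rightarrow> real \<times> real \<Rightarrow> bool" where
  "stationary_point J p \<longleftrightarrow> (J has_derivative (\<lambda>h. 0)) (at p)"

end

(*
  J(mu, sigma) splits into the expected reward under N(mu, sigma^2) plus alpha times the
  Gaussian differential entropy ln(2 pi e sigma^2)/2.  When sigma grows to t, the entropy
  term gains alpha (ln t - ln sigma) >= alpha (1 - sigma/t), while the reward term can lose
  at most 2 r_max (1 - sigma/t), because (sigma/t) N(mu, sigma^2) <= N(mu, t^2) pointwise, so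
  the two densities share all but 1 - sigma/t of their mass.  Hence the right difference
  quotient of J in sigma stays above (alpha - 2 r_max)/(sigma + h), and the partial
  derivative in sigma is at least (alpha - 2 r_max)/sigma > 0.
*)

theory Submission imports Defs begin

lemma integrable_mult_bounded:
  fixes f r :: "'a \<Rightarrow> real"
  assumes f: "integrable M f" and r: "r \<in> borel_measurable M" "\<And>x. \<bar>r x\<bar> \<le> R"
  shows "integrable M (\<lambda>x. f x * r x)"
proof (rule Bochner_Integration.integrable_bound)
  have "0 \<le> R"
    using abs_ge_zero r(2) by (rule order_trans)
  show "integrable M (\<lambda>x. R * \<bar>f x\<bar>)"
    using f by auto
  show "(\<lambda>x. f x * r x) \<in> borel_measurable M"
    using f r by measurable
  show "AE x in M. norm (f x * r x) \<le> norm (R * \<bar>f x\<bar>)"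
  proof (intro AE_I2)
    fix x
    have "\<bar>f x\<bar> * \<bar>r x\<bar> \<le> \<bar>f x\<bar> * R"
      by (intro mult_left_mono r) simp
    then show "norm (f x * r x) \<le> norm (R * \<bar>f x\<bar>)"
      using \<open>0 \<le> R\<close> by (simp add: abs_mult mult.commute)
  qed
qed

lemma expectation_diff_ge_of_density_ge:
  fixes f g r :: "'a \<Rightarrow> real"
  assumes f: "integrable M f" "integral\<^sup>L M f = 1"
    and g: "integrable M g" "integral\<^sup>L M g = 1" "\<And>x. 0 \<le> g x"
    and dom: "\<And>x. k * g x \<le> f x"
    and r: "r \<in> borel_measurable M" "\<And>x. \<bar>r x\<bar> \<le> R"
  shows "(\<integral>x. f x * r x \<partial>M) - (\<integral>x. g x * r x \<partial>M) \<ge> - 2 * R * (1 - k)"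
proof -
  \<comment> \<open>f r = (f - k g) r + k g r, and f - k g is a nonnegative weight of mass 1 - k.\<close>
  have fr: "integrable M (\<lambda>x. f x * r x)" and gr: "integrable M (\<lambda>x. g x * r x)"
    using integrable_mult_bounded f(1) g(1) r by blast+
  have "k = (\<integral>x. k * g x \<partial>M)"
    using g by simp
  also have "\<dots> \<le> 1"
    using integral_mono[OF _ f(1) dom] g(1) f(2) by simp
  finally have k: "k \<le> 1" .
  have "- R * (1 - k) = (\<integral>x. - R * (f x - k * g x) \<partial>M)"
    using f g by simp
  also have "\<dots> \<le> (\<integral>x. (f x - k * g x) * r x \<partial>M)"
  proof (rule integral_mono)
    show "integrable M (\<lambda>x. - R * (f x - k * g x))"
      using f g by simp
    show "integrable M (\<lambda>x. (f x - k * g x) * r x)"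
      using fr gr by (simp add: left_diff_distrib mult.assoc)
    fix x
    show "- R * (f x - k * g x) \<le> (f x - k * g x) * r x"
      using mult_right_mono[of "- R" "r x" "f x - k * g x"] r(2)[of x] dom[of x]
      by (simp add: mult.commute)
  qed
  also have "\<dots> = (\<integral>x. f x * r x \<partial>M) - k * (\<integral>x. g x * r x \<partial>M)"
    using fr gr by (simp add: left_diff_distrib mult.assoc)
  finally have lower: "- R * (1 - k) \<le> (\<integral>x. f x * r x \<partial>M) - k * (\<integral>x. g x * r x \<partial>M)" .
  have "(\<integral>x. g x * r x \<partial>M) \<le> (\<integral>x. g x * R \<partial>M)"
    using gr g r(2) by (intro integral_mono mult_left_mono) (auto simp: abs_le_iff)
  then have "(1 - k) * (\<integral>x. g x * r x \<partial>M) \<le> (1 - k) * R"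
    using g(2) k by (intro mult_left_mono) auto
  with lower show ?thesis
    by (simp add: algebra_simps)
qed

lemma normal_density_scaled_le:
  assumes "0 < \<sigma>" "\<sigma> \<le> t"
  shows "\<sigma> / t * normal_density \<mu> \<sigma> x \<le> normal_density \<mu> t x"
proof -
  have "\<sigma> / t * normal_density \<mu> \<sigma> x
          = 1 / sqrt (2 * pi * t\<^sup>2) * exp (- (x - \<mu>)\<^sup>2 / (2 * \<sigma>\<^sup>2))"
    using assms by (simp add: normal_density_def real_sqrt_mult field_simps)
  also have "\<dots> \<le> 1 / sqrt (2 * pi * t\<^sup>2) * exp (- (x - \<mu>)\<^sup>2 / (2 * t\<^sup>2))"
    using assms by (auto intro!: divide_right_mono divide_left_mono power_mono)
  also have "\<dots> = normal_density \<mu> t x"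
    by (simp add: normal_density_def)
  finally show ?thesis .
qed

lemma ln_normal_density:
  assumes "0 < \<sigma>"
  shows "ln (normal_density \<mu> \<sigma> x) = - ln (2 * pi * \<sigma>\<^sup>2) / 2 - (x - \<mu>)\<^sup>2 / (2 * \<sigma>\<^sup>2)"
  using assms by (simp add: normal_density_def ln_mult ln_div ln_sqrt algebra_simps)

lemma has_bochner_integral_normal_density_ln:
  assumes "0 < \<sigma>"
  shows "has_bochner_integral lborel (\<lambda>x. normal_density \<mu> \<sigma> x * ln (normal_density \<mu> \<sigma> x))
           (- ln (2 * pi * exp 1 * \<sigma>\<^sup>2) / 2)"
proof -
  let ?N = "normal_density \<mu> \<sigma>" and ?c = "ln (2 * pi * \<sigma>\<^sup>2) / 2"
  have "has_bochner_integral lborel (\<lambda>x. - ?c * ?N x - 1 / (2 * \<sigma>\<^sup>2) * (?N x * (x - \<mu>)\<^sup>2))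
          (- ?c * 1 - 1 / (2 * \<sigma>\<^sup>2) * \<sigma>\<^sup>2)"
    using normal_moment_even[OF assms, where k=0 and \<mu>=\<mu>] normal_moment_even[OF assms, where k=1 and \<mu>=\<mu>]
    by (intro has_bochner_integral_diff has_bochner_integral_mult_right) simp_all
  moreover have "- ?c * 1 - 1 / (2 * \<sigma>\<^sup>2) * \<sigma>\<^sup>2 = - ln (2 * pi * exp 1 * \<sigma>\<^sup>2) / 2"
    using assms by (simp add: ln_mult field_simps)
  moreover have "?N x * ln (?N x) = - ?c * ?N x - 1 / (2 * \<sigma>\<^sup>2) * (?N x * (x - \<mu>)\<^sup>2)" for x
    using assms by (simp add: ln_normal_density right_diff_distrib)
  ultimately show ?thesis
    by simp
qed

lemma DERIV_ge_of_right_increments_ge: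
  fixes f \<phi> :: "real \<Rightarrow> real"
  assumes D: "(f has_real_derivative D) (at x)"
    and \<phi>: "(\<phi> \<longlongrightarrow> L) (at_right 0)"
    and incr: "\<forall>\<^sub>F h in at_right 0. \<phi> h * h \<le> f (x + h) - f x"
  shows "L \<le> D"
proof (rule tendsto_le[OF _ _ \<phi>])
  show "((\<lambda>h. (f (x + h) - f x) / h) \<longlongrightarrow> D) (at_right 0)"
    using D by (simp add: DERIV_def filterlim_at_split)
  show "\<forall>\<^sub>F h in at_right 0. \<phi> h \<le> (f (x + h) - f x) / h"
    using incr eventually_at_right_less[of 0]
    by eventually_elim (simp add: pos_le_divide_eq)
qed simp

lemma stationary_point_imp_DERIV_snd:
  assumes "stationary_point J (x, y)"
  shows "((\<lambda>t. J (x, t)) has_real_derivative 0) (at y)"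
proof -
  have "((\<lambda>t. (x, t)) has_derivative (\<lambda>h. (0, h))) (at y)"
    by (auto intro!: derivative_eq_intros)
  from has_derivative_compose[OF this assms[unfolded stationary_point_def]]
  show ?thesis
    by (simp add: has_field_derivative_def mult_zero_left[abs_def, symmetric])
qed

lemma gauss_obj_eq:
  fixes r :: "real \<Rightarrow> real"
  assumes "0 < \<sigma>" and r: "r \<in> borel_measurable lborel" "\<And>a. \<bar>r a\<bar> \<le> R"
  shows "gauss_obj r \<alpha> (\<mu>, \<sigma>)
           = (\<integral>a. normal_density \<mu> \<sigma> a * r a \<partial>lborel) + \<alpha> * ln (2 * pi * exp 1 * \<sigma>\<^sup>2) / 2"
proof -
  let ?N = "normal_density \<mu> \<sigma>"
  note entropy = has_bochner_integral_normal_density_ln[OF assms(1), where \<mu>=\<mu>]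
  have "gauss_obj r \<alpha> (\<mu>, \<sigma>) = (\<integral>a. ?N a * r a - \<alpha> * (?N a * ln (?N a)) \<partial>lborel)"
    unfolding gauss_obj_def Let_def using r(1)
    by (simp add: integral_density algebra_simps)
  also have "\<dots> = (\<integral>a. ?N a * r a \<partial>lborel) - \<alpha> * (\<integral>a. ?N a * ln (?N a) \<partial>lborel)"
    using integrable_mult_bounded[OF integrable_normal_density[OF assms(1)] r] integrable.intros[OF entropy]
    by simp
  also have "\<dots> = (\<integral>a. ?N a * r a \<partial>lborel) + \<alpha> * ln (2 * pi * exp 1 * \<sigma>\<^sup>2) / 2"
    using has_bochner_integral_integral_eq[OF entropy] by simp
  finally show ?thesis .
qed

lemma gauss_obj_increment_ge:
  fixes r :: "real \<Rightarrow> real"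
  assumes "0 < \<sigma>" "\<sigma> \<le> t" "0 \<le> \<alpha>"
    and r: "r \<in> borel_measurable lborel" "\<And>a. \<bar>r a\<bar> \<le> R"
  shows "gauss_obj r \<alpha> (\<mu>, t) - gauss_obj r \<alpha> (\<mu>, \<sigma>) \<ge> (\<alpha> - 2 * R) * (1 - \<sigma> / t)"
proof -
  have t: "0 < t"
    using assms by linarith
  have reward: "(\<integral>a. normal_density \<mu> t a * r a \<partial>lborel) - (\<integral>a. normal_density \<mu> \<sigma> a * r a \<partial>lborel)
      \<ge> - 2 * R * (1 - \<sigma> / t)"
    using assms t
    by (intro expectation_diff_ge_of_density_ge normal_density_scaled_le r) simp_all
  have "ln (\<sigma> / t) \<le> \<sigma> / t - 1"
    using assms t by (intro ln_le_minus_one) simp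
  then have "1 - \<sigma> / t \<le> ln t - ln \<sigma>"
    using assms t by (simp add: ln_div)
  also have "ln t - ln \<sigma> = ln (2 * pi * exp 1 * t\<^sup>2) / 2 - ln (2 * pi * exp 1 * \<sigma>\<^sup>2) / 2"
    using assms t by (simp add: ln_mult ln_realpow field_simps)
  finally have "1 - \<sigma> / t \<le> ln (2 * pi * exp 1 * t\<^sup>2) / 2 - ln (2 * pi * exp 1 * \<sigma>\<^sup>2) / 2" .
  from mult_left_mono[OF this assms(3)]
  have entropy: "\<alpha> * (1 - \<sigma> / t)
      \<le> \<alpha> * ln (2 * pi * exp 1 * t\<^sup>2) / 2 - \<alpha> * ln (2 * pi * exp 1 * \<sigma>\<^sup>2) / 2"
    by (simp add: right_diff_distrib)
  have "(\<alpha> - 2 * R) * (1 - \<sigma> / t) = - 2 * R * (1 - \<sigma> / t) + \<alpha> * (1 - \<sigma> / t)"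
    by (simp add: algebra_simps)
  then show ?thesis
    unfolding gauss_obj_eq[OF t r] gauss_obj_eq[OF assms(1) r]
    using reward entropy by linarith
qed

theorem proposition3p3:
  fixes r :: "real \<Rightarrow> real" and r_max \<alpha> :: real
  assumes "integrable lborel r"
    and "\<And>a. \<bar>r a\<bar> \<le> r_max"
    and "\<alpha> > 2 * r_max"
  shows "\<not> (\<exists>\<mu> \<sigma>. \<sigma> > 0 \<and> stationary_point (gauss_obj r \<alpha>) (\<mu>, \<sigma>))"
proof
  assume "\<exists>\<mu> \<sigma>. \<sigma> > 0 \<and> stationary_point (gauss_obj r \<alpha>) (\<mu>, \<sigma>)"
  then obtain \<mu> \<sigma> where \<sigma>: "0 < \<sigma>" and stat: "stationary_point (gauss_obj r \<alpha>) (\<mu>, \<sigma>)"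
    by blast
  have r: "r \<in> borel_measurable lborel"
    using assms(1) by auto
  have "0 \<le> r_max"
    using abs_ge_zero assms(2) by (rule order_trans)
  then have "0 \<le> \<alpha>"
    using assms(3) by linarith
  have "(\<alpha> - 2 * r_max) / \<sigma> \<le> 0"
  proof (rule DERIV_ge_of_right_increments_ge[OF stationary_point_imp_DERIV_snd[OF stat]])
    show "((\<lambda>h. (\<alpha> - 2 * r_max) / (\<sigma> + h)) \<longlongrightarrow> (\<alpha> - 2 * r_max) / \<sigma>) (at_right 0)"
      using \<sigma> by (auto intro!: tendsto_eq_intros)
    show "\<forall>\<^sub>F h in at_right 0. (\<alpha> - 2 * r_max) / (\<sigma> + h) * h
                                \<le> gauss_obj r \<alpha> (\<mu>, \<sigma> + h) - gauss_obj r \<alpha> (\<mu>, \<sigma>)"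
      using eventually_at_right_less[of 0]
    proof eventually_elim
      case (elim h)
      have "(\<alpha> - 2 * r_max) / (\<sigma> + h) * h = (\<alpha> - 2 * r_max) * (1 - \<sigma> / (\<sigma> + h))"
        using \<sigma> elim by (simp add: field_simps)
      also have "\<dots> \<le> gauss_obj r \<alpha> (\<mu>, \<sigma> + h) - gauss_obj r \<alpha> (\<mu>, \<sigma>)"
        using \<sigma> elim \<open>0 \<le> \<alpha>\<close> by (intro gauss_obj_increment_ge r assms(2)) simp_all
      finally show ?case .
    qed
  qed
  with \<sigma> assms(3) show False
    by (simp add: divide_le_0_iff)
qed

end
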